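(* Let $\mathcal{A}=\{\pm e_1,\ldots,\pm e_n\}$ be the set of signed canonical unit vectors in $\mathbb{R}^n$, so that $\|\cdot\|_{\mathcal{A}}=\|\cdot\|_1$. Suppose $x^\star\in\mathbb{R}^n$ has $k\ge1$ nonzero entries, and let $\gamma\in[0,1]$. Then $$\phi_\gamma(x^\star,\mathcal{A}):=\inf\left\{\frac{\|z\|_2}{\|z\|_1}: 0\ne z\in C_\gamma(x^\star,\mathcal{A})\right\}\ \ge\ \frac{1-\gamma}{2\sqrt{k}},$$ where $C_\gamma(x^\star,\mathcal{A})=\operatorname{cone}\left(\{z\in\mathbb{R}^n:\|x^\star+z\|_1\le\|x^\star\|_1+\gamma\|z\|_1\}\right)$.
   Context: $\operatorname{cone}(X)=\{\lambda x:\lambda\ge0,x\in X\}$ denotes the conic hull. *)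

theory Defs
  imports "HOL-Analysis.Analysis"
begin

text \<open>l1 norm on R^n, which equals the atomic norm for A = {+-e_i}.\<close>
definition norm1 :: "real ^ 'n \<Rightarrow> real" where
  "norm1 x = (\<Sum>i\<in>UNIV. \<bar>x $ i\<bar>)"

definition conic_hull_set :: "('a::real_vector) set \<Rightarrow> 'a set" where
  "conic_hull_set X = {c *\<^sub>R x | c x. c \<ge> 0 \<and> x \<in> X}"

definition C_gamma :: "real \<Rightarrow> real ^ 'n \<Rightarrow> (real ^ 'n) set" where
  "C_gamma \<gamma> xs = conic_hull_set {z. norm1 (xs + z) \<le> norm1 xs + \<gamma> * norm1 z}"

definition phi_gamma :: "real \<Rightarrow> real ^ 'n \<Rightarrow> real" where
  "phi_gamma \<gamma> xs = Inf {norm z / norm1 z | z. z \<noteq> 0 \<and> z \<in> C_gamma \<gamma> xs}"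

end

theory Submission
  imports Defs
begin

(* Let S be the support of x*, |S| = k. If ||x* + y||_1 <= ||x*||_1 + gamma ||y||_1, the
   triangle inequality on S shows that the l1-mass of y off S exceeds its mass on S by at
   most gamma ||y||_1, hence (1 - gamma) ||y||_1 <= 2 sum_{i in S} |y_i| <= 2 sqrt k ||y||_2
   by Cauchy-Schwarz. The ratio ||z||_2 / ||z||_1 is invariant under positive scaling, so
   the bound extends from the generating set to its cone. *)

lemma norm1_scaleR: "norm1 (c *\<^sub>R y) = \<bar>c\<bar> * norm1 y"
  by (simp add: norm1_def abs_mult sum_distrib_left)

lemma norm1_pos:
  assumes "z \<noteq> 0"
  shows "norm1 z > 0"
proof -
  obtain i where i: "z $ i \<noteq> 0"
    using assms by (metis vec_eq_iff zero_index)
  have "\<bar>z $ i\<bar> \<le> norm1 z"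
    unfolding norm1_def by (rule member_le_sum) auto
  with i show ?thesis by linarith
qed

lemma L2_set_vec_le_norm:
  fixes z :: "real ^ 'n"
  shows "L2_set (\<lambda>i. z $ i) S \<le> norm z"
proof -
  have "(\<Sum>i\<in>S. (z $ i)\<^sup>2) \<le> (\<Sum>i\<in>UNIV. (z $ i)\<^sup>2)"
    by (rule sum_mono2) auto
  then show ?thesis
    by (simp add: L2_set_def norm_vec_def)
qed

lemma sum_abs_le_sqrt_card_mult_norm:
  fixes z :: "real ^ 'n"
  shows "(\<Sum>i\<in>S. \<bar>z $ i\<bar>) \<le> sqrt (real (card S)) * norm z"
proof -
  have "(\<Sum>i\<in>S. \<bar>z $ i\<bar>) = (\<Sum>i\<in>S. \<bar>z $ i\<bar> * \<bar>1::real\<bar>)"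
    by simp
  also have "\<dots> \<le> L2_set (\<lambda>i. z $ i) S * L2_set (\<lambda>_. 1::real) S"
    by (rule L2_set_mult_ineq)
  also have "\<dots> = sqrt (real (card S)) * L2_set (\<lambda>i. z $ i) S"
    by (simp add: L2_set_constant)
  also have "\<dots> \<le> sqrt (real (card S)) * norm z"
    by (simp add: L2_set_vec_le_norm mult_left_mono)
  finally show ?thesis .
qed

lemma norm1_add_ge_off_support_minus_on_support:
  fixes x y :: "real ^ 'n"
  assumes "{i. x $ i \<noteq> 0} \<subseteq> S"
  shows "norm1 x + (\<Sum>i\<in>-S. \<bar>y $ i\<bar>) - (\<Sum>i\<in>S. \<bar>y $ i\<bar>) \<le> norm1 (x + y)"
proof -
  have "(\<Sum>i\<in>-S. \<bar>y $ i\<bar>) - (\<Sum>i\<in>S. \<bar>y $ i\<bar>)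
      = (\<Sum>i\<in>UNIV. if i \<in> S then - \<bar>y $ i\<bar> else \<bar>y $ i\<bar>)"
    by (simp add: sum.If_cases sum_negf Int_commute[of UNIV])
  moreover have "\<bar>x $ i\<bar> + (if i \<in> S then - \<bar>y $ i\<bar> else \<bar>y $ i\<bar>) \<le> \<bar>(x + y) $ i\<bar>" for i
  proof (cases "i \<in> S")
    case False
    with assms have "x $ i = 0" by blast
    then show ?thesis using False by simp
  qed auto
  then have "norm1 x + (\<Sum>i\<in>UNIV. if i \<in> S then - \<bar>y $ i\<bar> else \<bar>y $ i\<bar>)
      \<le> norm1 (x + y)"
    unfolding norm1_def sum.distrib[symmetric] by (rule sum_mono)
  ultimately show ?thesis by linarith
qed

lemma norm1_le_twice_mass_on_support:
  fixes x y :: "real ^ 'n"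
  assumes "norm1 (x + y) \<le> norm1 x + \<gamma> * norm1 y"
  shows "(1 - \<gamma>) * norm1 y \<le> 2 * (\<Sum>i\<in>{i. x $ i \<noteq> 0}. \<bar>y $ i\<bar>)"
proof -
  define S where "S = {i. x $ i \<noteq> 0}"
  have split: "norm1 y = (\<Sum>i\<in>S. \<bar>y $ i\<bar>) + (\<Sum>i\<in>-S. \<bar>y $ i\<bar>)"
    unfolding norm1_def using sum.union_disjoint[of S "-S" "\<lambda>i. \<bar>y $ i\<bar>"]
    by (simp add: Compl_partition)
  have "(\<Sum>i\<in>-S. \<bar>y $ i\<bar>) - (\<Sum>i\<in>S. \<bar>y $ i\<bar>) \<le> \<gamma> * norm1 y"
    using norm1_add_ge_off_support_minus_on_support[of x S y] assms by (simp add: S_def)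
  with split show ?thesis
    by (simp add: S_def algebra_simps)
qed

lemma subset_conic_hull_set: "X \<subseteq> conic_hull_set X"
proof
  fix x assume "x \<in> X"
  then have "x = 1 *\<^sub>R x \<and> (1::real) \<ge> 0 \<and> x \<in> X" by simp
  then show "x \<in> conic_hull_set X" unfolding conic_hull_set_def by blast
qed

lemma norm_ratio_in_conic_hull:
  assumes "z \<in> conic_hull_set X" and "z \<noteq> 0"
  obtains y where "y \<in> X" and "y \<noteq> 0" and "norm z / norm1 z = norm y / norm1 y"
proof -
  obtain c y where z: "z = c *\<^sub>R y" "c \<ge> 0" "y \<in> X"
    using assms(1) unfolding conic_hull_set_def by blast
  with assms(2) have "c > 0" "y \<noteq> 0" by auto
  with z that show ?thesis by (simp add: norm1_scaleR)
qed

theorem proposition4: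
  fixes xs :: "real ^ 'n" and k :: nat and \<gamma> :: real
  assumes "card {i. xs $ i \<noteq> 0} = k" and "k \<ge> 1"
    and "0 \<le> \<gamma>" and "\<gamma> \<le> 1"
  shows "phi_gamma \<gamma> xs \<ge> (1 - \<gamma>) / (2 * sqrt (real k))"
  unfolding phi_gamma_def
proof (rule cInf_greatest)
  have "- xs \<in> {z. norm1 (xs + z) \<le> norm1 xs + \<gamma> * norm1 z}"
    using assms(3) by (simp add: norm1_def sum_nonneg)
  then have "- xs \<in> C_gamma \<gamma> xs"
    unfolding C_gamma_def by (rule subsetD[OF subset_conic_hull_set])
  moreover have "- xs \<noteq> 0" using assms(1,2) by auto
  ultimately show "{norm z / norm1 z |z. z \<noteq> 0 \<and> z \<in> C_gamma \<gamma> xs} \<noteq> {}"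
    by blast
next
  fix r assume "r \<in> {norm z / norm1 z |z. z \<noteq> 0 \<and> z \<in> C_gamma \<gamma> xs}"
  then obtain y where y: "norm1 (xs + y) \<le> norm1 xs + \<gamma> * norm1 y" "y \<noteq> 0"
    and r: "r = norm y / norm1 y"
    unfolding C_gamma_def by (auto elim: norm_ratio_in_conic_hull)
  have "(1 - \<gamma>) * norm1 y \<le> 2 * sqrt (real k) * norm y"
    using norm1_le_twice_mass_on_support[OF y(1)]
      sum_abs_le_sqrt_card_mult_norm[of y "{i. xs $ i \<noteq> 0}"] assms(1) by simp
  moreover have "norm1 y > 0" "sqrt (real k) > 0"
    using norm1_pos[OF y(2)] assms(2) by auto
  ultimately show "(1 - \<gamma>) / (2 * sqrt (real k)) \<le> r"
    unfolding r by (simp add: divide_simps mult.commute mult.left_commute)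
qed

end
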